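(* The following are equivalent: (i) $\sup_{d\in\mathbb N} n^{X_d}(\varepsilon)<\infty$ for every $\varepsilon\in(0,1)$; (ii) $\displaystyle\lim_{t\to0}\ \sup_{d\in\mathbb N}\sum_{k=1}^\infty \bar\lambda^{X_d}_k\,\mathbf 1\bigl(\bar\lambda^{X_d}_k<t\bigr)=0$.
   Context: For each $d\in\mathbb N$, $X_d$ is a random element of a separable Hilbert space $H_d$ with $\mathbb E X_d=0$ and $\mathbb E\|X_d\|_{H_d}^2<\infty$. For a centered Hilbert-space random element $Z$ with finite second moment, $\lambda^Z_1\ge\lambda^Z_2\ge\dots\ge 0$ denote the eigenvalues of its covariance operator $K^Z$ listed with multiplicity (padded with zeros if there are finitely many), $\Lambda^Z=\sum_k\lambda^Z_k=\mathbb E\|Z\|^2$, and $\bar\lambda^Z_k=\lambda^Z_k/\Lambda^Z$. It is assumed that $\lambda^{X_d}_1>0$ for all $d$. The average case approximation complexity is $n^{X_d}(\varepsilon)=\min\{n\in\mathbb N: e^{X_d}(n)\le \varepsilon\, e^{X_d}(0)\}$ for $\varepsilon\in(0,1)$, where $e^{X_d}(0)=(\mathbb E\|X_d\|^2)^{1/2}$ and $e^{X_d}(n)$ is the infimum of $(\mathbb E\|X_d-\sum_{m=1}^n l_m(X_d)\psi_m\|^2)^{1/2}$ over all $\psi_m\in H_d$, $l_m\in H_d^*$; equivalently $n^{X_d}(\varepsilon)=\min\{n\in\mathbb N:\ \sum_{k>n}\bar\lambda^{X_d}_k\le\varepsilon^2\}$. $\mathbf 1(A)$ is the indicator of the proposition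 $A$. *)

theory Defs
  imports "HOL-Analysis.Analysis"
begin

text \<open>A sequence of covariance eigenvalues (0-based: lam 0 is the paper's lambda_1),
  listed with multiplicity in nonincreasing order, nonnegative, summable
  (trace class, sum = E||X||^2), and with positive top eigenvalue.\<close>
definition eigen_seq :: "(nat \<Rightarrow> real) \<Rightarrow> bool" where
  "eigen_seq lam \<longleftrightarrow> (\<forall>k. 0 \<le> lam k) \<and> decseq lam \<and> summable lam \<and> 0 < lam 0"

definition trace_of :: "(nat \<Rightarrow> real) \<Rightarrow> real" where
  "trace_of lam = (\<Sum>k. lam k)"

definition lbar :: "(nat \<Rightarrow> real) \<Rightarrow> nat \<Rightarrow> real" where
  "lbar lam k = lam k / trace_of lam"

text \<open>Average case approximation complexity:
  n(eps) = min { n : sum_{k>n} bar-lambda_k <= eps^2 } (paper 1-based indices;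
  in 0-based indexing the tail after n terms is sum_j lbar (j + n)).\<close>
definition n_avg :: "(nat \<Rightarrow> real) \<Rightarrow> real \<Rightarrow> nat" where
  "n_avg lam eps = (LEAST n. (\<Sum>j. lbar lam (j + n)) \<le> eps\<^sup>2)"

end

theory Submission
  imports Defs
begin

text \<open>Write \<open>S\<^sub>d(t)\<close> (\<open>small_mass\<close> below) for the total mass of the normalized eigenvalues of \<open>X\<^sub>d\<close> lying below \<open>t\<close>.
  Eigenvalues of index at least \<open>N\<close> contribute at most the tail after \<open>N\<close>, and each of the
  first \<open>N\<close> contributes less than \<open>t\<close>; with \<open>N = n(\<epsilon>)\<close> this gives
  \<open>S\<^sub>d(t) \<le> \<epsilon>\<^sup>2 + n(\<epsilon>) t\<close>, so (i) implies (ii).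
  Conversely, a nonincreasing sequence of total mass 1 satisfies \<open>\<lambda>\<^sub>k \<le> 1/(k+1)\<close>, so all
  eigenvalues of index at least \<open>\<lceil>1/t\<rceil>\<close> lie below \<open>t\<close> and the tail after \<open>\<lceil>1/t\<rceil>\<close> is at most
  \<open>S\<^sub>d(t)\<close>; a \<open>t > 0\<close> with \<open>sup\<^sub>d S\<^sub>d(t) \<le> \<epsilon>\<^sup>2\<close> then bounds \<open>n(\<epsilon>)\<close> by \<open>\<lceil>1/t\<rceil>\<close> uniformly in \<open>d\<close>.\<close>

definition small_mass :: "(nat \<Rightarrow> real) \<Rightarrow> real \<Rightarrow> real" where
  "small_mass l t = (\<Sum>k. l k * (if l k < t then 1 else 0))"

lemma summable_small_mass_terms:
  assumes "\<And>k. 0 \<le> l k" "summable l"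
  shows "summable (\<lambda>k. l k * (if l k < t then 1 else (0::real)))"
  by (rule summable_comparison_test[OF _ assms(2)]) (auto simp: assms(1))

lemma small_mass_nonneg:
  assumes "\<And>k. 0 \<le> l k" "summable l"
  shows "0 \<le> small_mass l t"
  unfolding small_mass_def
  by (rule suminf_nonneg[OF summable_small_mass_terms[OF assms]]) (simp add: assms(1))

lemma small_mass_le_suminf:
  assumes "\<And>k. 0 \<le> l k" "summable l"
  shows "small_mass l t \<le> suminf l"
  unfolding small_mass_def
  by (rule suminf_le[OF _ summable_small_mass_terms[OF assms] assms(2)]) (simp add: assms(1))

lemma small_mass_le_tail_plus:
  assumes nonneg: "\<And>k. 0 \<le> l k" and summable: "summable l"
  shows "small_mass l t \<le> (\<Sum>j. l (j + N)) + real N * \<bar>t\<bar>"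
proof -
  let ?f = "\<lambda>k. l k * (if l k < t then 1 else (0::real))"
  have f: "summable ?f"
    by (rule summable_small_mass_terms[OF nonneg summable])
  have "small_mass l t = (\<Sum>j. ?f (j + N)) + (\<Sum>i<N. ?f i)"
    unfolding small_mass_def by (rule suminf_split_initial_segment[OF f])
  moreover have "(\<Sum>j. ?f (j + N)) \<le> (\<Sum>j. l (j + N))"
    using nonneg summable_ignore_initial_segment[OF f] summable_ignore_initial_segment[OF summable]
    by (intro suminf_le) auto
  moreover have "(\<Sum>i<N. ?f i) \<le> (\<Sum>i<N. \<bar>t\<bar>)"
    by (rule sum_mono) auto
  ultimately show ?thesis
    by simp
qed

lemma tail_le_small_mass:
  assumes nonneg: "\<And>k. 0 \<le> l k" and summable: "summable l"
    and below: "\<And>k. N \<le> k \<Longrightarrow> l k < t"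
  shows "(\<Sum>j. l (j + N)) \<le> small_mass l t"
proof -
  let ?f = "\<lambda>k. l k * (if l k < t then 1 else (0::real))"
  have "small_mass l t = (\<Sum>j. ?f (j + N)) + (\<Sum>i<N. ?f i)"
    unfolding small_mass_def
    by (rule suminf_split_initial_segment[OF summable_small_mass_terms[OF nonneg summable]])
  moreover have "(\<Sum>j. ?f (j + N)) = (\<Sum>j. l (j + N))"
    using below by simp
  moreover have "0 \<le> (\<Sum>i<N. ?f i)"
    by (rule sum_nonneg) (simp add: nonneg)
  ultimately show ?thesis
    by simp
qed

lemma decseq_Suc_mult_le_suminf:
  fixes l :: "nat \<Rightarrow> real"
  assumes nonneg: "\<And>k. 0 \<le> l k" and summable: "summable l" and dec: "decseq l"
  shows "real (Suc m) * l m \<le> suminf l"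
proof -
  have "real (Suc m) * l m = (\<Sum>i\<le>m. l m)"
    by simp
  also have "\<dots> \<le> (\<Sum>i\<le>m. l i)"
    using dec by (intro sum_mono) (simp add: decseqD)
  also have "\<dots> \<le> suminf l"
    by (rule sum_le_suminf[OF summable]) (auto simp: nonneg)
  finally show ?thesis .
qed

lemma trace_of_pos: "eigen_seq lam \<Longrightarrow> 0 < trace_of lam"
  unfolding eigen_seq_def trace_of_def
  using sum_le_suminf[of lam "{0}"] by fastforce

lemma lbar_nonneg: "eigen_seq lam \<Longrightarrow> 0 \<le> lbar lam k"
  using trace_of_pos[of lam] by (simp add: eigen_seq_def lbar_def)

lemma summable_lbar: "eigen_seq lam \<Longrightarrow> summable (lbar lam)"
  unfolding eigen_seq_def lbar_def by simp

lemma decseq_lbar: "eigen_seq lam \<Longrightarrow> decseq (lbar lam)"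
  using trace_of_pos[of lam]
  by (auto simp: eigen_seq_def lbar_def decseq_def divide_right_mono)

lemma suminf_lbar: "eigen_seq lam \<Longrightarrow> suminf (lbar lam) = 1"
  using trace_of_pos[of lam] suminf_divide[of lam "trace_of lam"]
  by (simp add: eigen_seq_def lbar_def[abs_def] trace_of_def)

lemma lbar_small_mass_le_one: "eigen_seq lam \<Longrightarrow> small_mass (lbar lam) t \<le> 1"
  using small_mass_le_suminf[of "lbar lam"]
  by (simp add: lbar_nonneg summable_lbar suminf_lbar)

lemma lbar_less_beyond_ceiling:
  assumes lam: "eigen_seq lam" and t: "0 < t" and k: "nat \<lceil>1/t\<rceil> \<le> k"
  shows "lbar lam k < t"
proof -
  have "real (Suc k) * lbar lam k \<le> 1"
    using decseq_Suc_mult_le_suminf[of "lbar lam" k]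
    by (simp add: lam lbar_nonneg summable_lbar decseq_lbar suminf_lbar)
  moreover have "1 < real (Suc k) * t"
    using k t by (simp add: field_simps)
  ultimately show ?thesis
    using t by (smt (verit) mult_left_mono of_nat_0_le_iff)
qed

lemma n_avg_tail_le:
  assumes lam: "eigen_seq lam" and eps: "0 < eps"
  shows "(\<Sum>j. lbar lam (j + n_avg lam eps)) \<le> eps\<^sup>2"
proof -
  have "(\<lambda>n. \<Sum>j. lbar lam (j + n)) \<longlonglongrightarrow> 0"
    by (rule suminf_exist_split2[OF summable_lbar[OF lam]])
  then have "\<forall>\<^sub>F n in sequentially. (\<Sum>j. lbar lam (j + n)) < eps\<^sup>2"
    using eps by (intro order_tendstoD(2)) auto
  then obtain N where "(\<Sum>j. lbar lam (j + N)) < eps\<^sup>2"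
    using eventually_happens'[OF sequentially_bot] by blast
  then show ?thesis
    unfolding n_avg_def by (rule LeastI[OF less_imp_le])
qed

lemma n_avg_le: "(\<Sum>j. lbar lam (j + N)) \<le> eps\<^sup>2 \<Longrightarrow> n_avg lam eps \<le> N"
  unfolding n_avg_def by (rule Least_le)

lemma small_mass_le_n_avg:
  assumes "eigen_seq lam" "0 < eps"
  shows "small_mass (lbar lam) t \<le> eps\<^sup>2 + real (n_avg lam eps) * \<bar>t\<bar>"
  using small_mass_le_tail_plus[of "lbar lam" t "n_avg lam eps"] n_avg_tail_le[OF assms]
  by (simp add: assms(1) lbar_nonneg summable_lbar)

lemma n_avg_le_ceiling:
  assumes lam: "eigen_seq lam" and t: "0 < t" and mass: "small_mass (lbar lam) t \<le> eps\<^sup>2"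
  shows "n_avg lam eps \<le> nat \<lceil>1/t\<rceil>"
proof (rule n_avg_le)
  have "(\<Sum>j. lbar lam (j + nat \<lceil>1/t\<rceil>)) \<le> small_mass (lbar lam) t"
    using lam t by (intro tail_le_small_mass lbar_nonneg summable_lbar lbar_less_beyond_ceiling)
  then show "(\<Sum>j. lbar lam (j + nat \<lceil>1/t\<rceil>)) \<le> eps\<^sup>2"
    using mass by linarith
qed

lemma tendsto_zero_at_zero_if_linear_bounds:
  fixes f :: "real \<Rightarrow> real"
  assumes bounds: "\<And>e. 0 < e \<Longrightarrow> \<exists>C. \<forall>t. \<bar>f t\<bar> \<le> e + C * \<bar>t\<bar>"
  shows "(f \<longlongrightarrow> 0) (at 0)"
proof (rule tendstoI)
  fix r :: real
  assume r: "0 < r"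
  obtain C where C: "\<And>t. \<bar>f t\<bar> \<le> r/2 + C * \<bar>t\<bar>"
    using bounds[of "r/2"] r by auto
  have "\<forall>\<^sub>F t in at 0. \<bar>t\<bar> < r/2 / (\<bar>C\<bar> + 1)"
    unfolding eventually_at using r by (intro exI[of _ "r/2 / (\<bar>C\<bar> + 1)"]) auto
  then show "\<forall>\<^sub>F t in at 0. dist (f t) 0 < r"
  proof (rule eventually_mono)
    fix t :: real
    assume t: "\<bar>t\<bar> < r/2 / (\<bar>C\<bar> + 1)"
    have "C * \<bar>t\<bar> \<le> (\<bar>C\<bar> + 1) * \<bar>t\<bar>"
      by (intro mult_right_mono) auto
    also have "\<dots> < r/2"
      using t by (simp add: field_simps)
    finally show "dist (f t) 0 < r"
      using C[of t] by simp
  qed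
qed

lemma bdd_above_small_mass_lbar:
  assumes "\<And>d. eigen_seq (lam d)"
  shows "bdd_above (range (\<lambda>d. small_mass (lbar (lam d)) t))"
  using lbar_small_mass_le_one[OF assms] by (intro bdd_aboveI2) auto

lemma SUP_small_mass_lbar_nonneg:
  assumes "\<And>d. eigen_seq (lam d)"
  shows "0 \<le> (SUP d. small_mass (lbar (lam d)) t)"
proof -
  have "0 \<le> small_mass (lbar (lam d)) t" for d
    using assms by (intro small_mass_nonneg lbar_nonneg summable_lbar)
  also have "small_mass (lbar (lam d)) t \<le> (SUP d. small_mass (lbar (lam d)) t)" for d
    by (rule cSUP_upper[OF UNIV_I bdd_above_small_mass_lbar[of lam, OF assms]])
  finally show ?thesis .
qed

lemma tendsto_SUP_small_mass_if_bounded_n_avg: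
  assumes lam: "\<And>d. eigen_seq (lam d)"
    and bounded: "\<And>eps. 0 < eps \<Longrightarrow> eps < 1 \<Longrightarrow> bdd_above (range (\<lambda>d. n_avg (lam d) eps))"
  shows "((\<lambda>t. SUP d. small_mass (lbar (lam d)) t) \<longlongrightarrow> 0) (at 0)"
proof (rule tendsto_zero_at_zero_if_linear_bounds)
  fix e :: real
  assume "0 < e"
  define eps where "eps = sqrt (min e (1/2))"
  have eps: "0 < eps" "eps < 1" "eps\<^sup>2 \<le> e"
    using \<open>0 < e\<close> by (auto simp: eps_def)
  obtain B where B: "\<And>d. n_avg (lam d) eps \<le> B"
    using bounded[OF eps(1,2)] by (auto simp: bdd_above_def)
  have "small_mass (lbar (lam d)) t \<le> e + real B * \<bar>t\<bar>" for d t
    using small_mass_le_n_avg[OF lam eps(1), of d t] B[of d] eps(3)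
    by (smt (verit) abs_ge_zero mult_right_mono of_nat_mono)
  then have "(SUP d. small_mass (lbar (lam d)) t) \<le> e + real B * \<bar>t\<bar>" for t
    by (intro cSUP_least) auto
  then show "\<exists>C. \<forall>t. \<bar>SUP d. small_mass (lbar (lam d)) t\<bar> \<le> e + C * \<bar>t\<bar>"
    using SUP_small_mass_lbar_nonneg[of lam, OF lam] by auto
qed

lemma bounded_n_avg_if_tendsto_SUP_small_mass:
  assumes lam: "\<And>d. eigen_seq (lam d)"
    and lim: "((\<lambda>t. SUP d. small_mass (lbar (lam d)) t) \<longlongrightarrow> 0) (at 0)"
    and eps: "0 < eps"
  shows "bdd_above (range (\<lambda>d. n_avg (lam d) eps))"
proof -
  have "\<forall>\<^sub>F t in at_right 0. (SUP d. small_mass (lbar (lam d)) t) < eps\<^sup>2 \<and> 0 < t"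
    using order_tendstoD(2)[OF lim, of "eps\<^sup>2"] eps
    by (auto simp: eventually_at_split intro: eventually_conj eventually_at_right_less)
  then obtain t where t: "(SUP d. small_mass (lbar (lam d)) t) < eps\<^sup>2" "0 < t"
    using eventually_happens'[of "at_right (0::real)"] by auto
  have "n_avg (lam d) eps \<le> nat \<lceil>1/t\<rceil>" for d
    using cSUP_upper[OF _ bdd_above_small_mass_lbar[of lam, OF lam], of d t] t
    by (intro n_avg_le_ceiling[OF lam]) auto
  then show ?thesis
    by (intro bdd_aboveI2) auto
qed

theorem proposition3:
  fixes lam :: "nat \<Rightarrow> nat \<Rightarrow> real"
  assumes "\<And>d. eigen_seq (lam d)"
  shows "(\<forall>eps. 0 < eps \<and> eps < 1 \<longrightarrow> bdd_above (range (\<lambda>d. n_avg (lam d) eps)))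
     \<longleftrightarrow> ((\<lambda>t. SUP d. (\<Sum>k. lbar (lam d) k * (if lbar (lam d) k < t then 1 else 0)))
            \<longlongrightarrow> 0) (at 0)"
proof -
  have "(\<forall>eps. 0 < eps \<and> eps < 1 \<longrightarrow> bdd_above (range (\<lambda>d. n_avg (lam d) eps)))
      \<longleftrightarrow> ((\<lambda>t. SUP d. small_mass (lbar (lam d)) t) \<longlongrightarrow> 0) (at 0)"
    using tendsto_SUP_small_mass_if_bounded_n_avg[of lam, OF assms]
      bounded_n_avg_if_tendsto_SUP_small_mass[of lam, OF assms] by auto
  then show ?thesis
    by (simp add: small_mass_def)
qed

end
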